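(* For all integers $n \ge 1$ and $1 \le k \le n$, consideration probabilities are not identifiable in the Plackett--Luce with consideration (PL+C) model on the universe $\mathcal U=\{1,\dots,n\}$ with rankings of length $k$: there exist utilities $u_1,\dots,u_n$ and two distinct vectors of consideration probabilities $(p_1,\dots,p_n)\neq(p_1',\dots,p_n')$ with all entries in $(0,1]$ such that, with the utilities held fixed, both vectors induce exactly the same probability distribution over length-$k$ rankings.
   Context: PL+C model: universe $\mathcal U=\{1,\dots,n\}$, fixed ranking length $k\le n$. Each item $i$ has a utility $u_i$ and a consideration probability $p_i\in(0,1]$. A consideration set $C\subseteq\mathcal U$ is drawn by including each item $i$ independently with probability $p_i$, conditioned on $|C|\ge k$; i.e. for $|C|\ge k$, $\Pr_C(C)=\frac{1}{z_{k,p}}\prod_{i\in C}p_i\prod_{j\notin C}(1-p_j)$ with $z_{k,p}=\sum_{C:|C|\ge k}\prod_{i\in C}p_i\prod_{j\notin C}(1-p_j)$, and $\Pr_C(C)=0$ if $|C|<k$. Given $C$, a ranking $r=(r_1,\dots,r_k)$ of distinct items is produced by Plackett--Luce: $\Pr_{PL}(r\mid C)=\prod_{t=1}^k \frac{\exp(u_{r_t})}{\sum_{j\in C\setminus\{r_1,\dots,r_{t-1}\}}\exp(u_j)}$ if $\{r_1,\dots,r_k\}\subseteq C$, and $0$ otherwise. The PL+C probability of $r$ is $\Pr_{PLC}(r)=\sum_{C\subseteq\mathcal U}\Pr_C(C)\Pr_{PL}(r\mid C)$. *)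

theory Defs
  imports Complex_Main
begin

definition universe :: "nat \<Rightarrow> nat set" where
  "universe n = {1..n}"

definition cons_weight :: "nat \<Rightarrow> (nat \<Rightarrow> real) \<Rightarrow> nat set \<Rightarrow> real" where
  "cons_weight n p C = (\<Prod>i\<in>C. p i) * (\<Prod>j\<in>universe n - C. 1 - p j)"

definition z_norm :: "nat \<Rightarrow> nat \<Rightarrow> (nat \<Rightarrow> real) \<Rightarrow> real" where
  "z_norm n k p = (\<Sum>C\<in>{C. C \<subseteq> universe n \<and> card C \<ge> k}. cons_weight n p C)"

definition Pr_C :: "nat \<Rightarrow> nat \<Rightarrow> (nat \<Rightarrow> real) \<Rightarrow> nat set \<Rightarrow> real" where
  "Pr_C n k p C = (if C \<subseteq> universe n \<and> card C \<ge> k then cons_weight n p C / z_norm n k p else 0)"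

definition Pr_PL :: "(nat \<Rightarrow> real) \<Rightarrow> nat set \<Rightarrow> nat list \<Rightarrow> real" where
  "Pr_PL u C r = (if set r \<subseteq> C then
      (\<Prod>t<length r. exp (u (r ! t)) / (\<Sum>j\<in>C - set (take t r). exp (u j)))
    else 0)"

definition Pr_PLC :: "nat \<Rightarrow> nat \<Rightarrow> (nat \<Rightarrow> real) \<Rightarrow> (nat \<Rightarrow> real) \<Rightarrow> nat list \<Rightarrow> real" where
  "Pr_PLC n k u p r = (\<Sum>C\<in>Pow (universe n). Pr_C n k p C * Pr_PL u C r)"

definition rankings :: "nat \<Rightarrow> nat \<Rightarrow> nat list set" where
  "rankings n k = {r. distinct r \<and> length r = k \<and> set r \<subseteq> universe n}"

end

theory Submission
  imports Defs
begin

text \<open>With all utilities equal, Plackett--Luce picks uniformly among the remaining considered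
  items, so a ranking r of length k with set r \<subseteq> C has probability (|C| - k)! / |C|! given C.
  If moreover every item is considered with the same probability c, the weight of C depends only
  on m = |C|, and the supersets of set r of size m number (n - k choose m - k). The identity
  (n - k choose m - k) (m - k)! / m! = (n - k)! / n! * (n choose m) then shows that the mixture
  is the uniform distribution (n - k)! / n! on rankings, whatever c is. Hence c = 1 and c = 1/2
  cannot be told apart.\<close>

lemma finite_universe [simp]: "finite (universe n)"
  and card_universe [simp]: "card (universe n) = n"
  by (simp_all add: universe_def)

lemma prod_lessThan_diff_eq_fact_div:
  assumes "k \<le> m"
  shows "(\<Prod>t<k. real (m - t)) = fact m / fact (m - k)"
  using assms
proof (induction k)
  case 0
  then show ?case by simp
next
  case (Suc k)
  have "fact (m - k) = real (m - k) * (fact (m - Suc k) :: real)"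
    using Suc.prems by (metis Suc_diff_Suc Suc_le_lessD fact_Suc)
  with Suc show ?case
    by (simp del: of_nat_diff)
qed

lemma Pr_PL_const_utility:
  assumes "distinct r" "finite C"
  shows "Pr_PL (\<lambda>_. a) C r =
    (if set r \<subseteq> C then fact (card C - length r) / fact (card C) else 0)"
proof (cases "set r \<subseteq> C")
  case True
  have card_remaining: "card (C - set (take t r)) = card C - t" if "t < length r" for t
  proof -
    have "set (take t r) \<subseteq> C"
      using True set_take_subset by (metis order_trans)
    moreover have "card (set (take t r)) = t"
      using assms(1) that by (simp add: distinct_card)
    ultimately show ?thesis
      using assms(2) by (simp add: card_Diff_subset finite_subset)
  qed
  have "length r \<le> card C"
    using True assms by (metis card_mono distinct_card)
  then have "(\<Prod>t<length r. exp a / (\<Sum>j\<in>C - set (take t r). exp a))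
      = 1 / (\<Prod>t<length r. real (card C - t))"
    by (simp add: card_remaining prod_dividef del: of_nat_diff)
  also have "\<dots> = fact (card C - length r) / fact (card C)"
    using \<open>length r \<le> card C\<close> by (simp add: prod_lessThan_diff_eq_fact_div del: of_nat_diff)
  finally show ?thesis
    using True by (simp add: Pr_PL_def)
qed (simp add: Pr_PL_def)

lemma cons_weight_const:
  assumes "C \<subseteq> universe n"
  shows "cons_weight n (\<lambda>_. c) C = c ^ card C * (1 - c) ^ (n - card C)"
  using assms by (simp add: cons_weight_def universe_def card_Diff_subset finite_subset)

lemma sum_Pow_card:
  assumes "finite A"
  shows "(\<Sum>B\<in>Pow A. f (card B)) = (\<Sum>j\<le>card A. of_nat (card A choose j) * f j)"
proof -
  have "(\<Sum>B\<in>Pow A. f (card B)) = (\<Sum>j\<le>card A. \<Sum>B\<in>{B \<in> Pow A. card B = j}. f (card B))"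
    using assms by (intro sum.group[symmetric]) (auto simp: card_mono)
  also have "\<dots> = (\<Sum>j\<le>card A. of_nat (card A choose j) * f j)"
    using n_subsets[OF assms] by (intro sum.cong refl) simp
  finally show ?thesis .
qed

lemma sum_card_supersets:
  assumes "finite U" "S \<subseteq> U"
  shows "(\<Sum>C | S \<subseteq> C \<and> C \<subseteq> U. f (card C))
    = (\<Sum>m = card S..card U. of_nat ((card U - card S) choose (m - card S)) * f m)"
proof -
  have finite_S: "finite S"
    using assms finite_subset by blast
  have "{C. S \<subseteq> C \<and> C \<subseteq> U} = (\<union>) S ` Pow (U - S)"
  proof
    show "{C. S \<subseteq> C \<and> C \<subseteq> U} \<subseteq> (\<union>) S ` Pow (U - S)"
    proof
      fix C
      assume "C \<in> {C. S \<subseteq> C \<and> C \<subseteq> U}"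
      then have "C = S \<union> (C - S)" "C - S \<in> Pow (U - S)"
        by auto
      then show "C \<in> (\<union>) S ` Pow (U - S)"
        by blast
    qed
  qed (use assms(2) in auto)
  moreover have "inj_on ((\<union>) S) (Pow (U - S))"
    by (rule inj_onI) blast
  ultimately have "(\<Sum>C | S \<subseteq> C \<and> C \<subseteq> U. f (card C))
      = (\<Sum>B\<in>Pow (U - S). f (card (S \<union> B)))"
    by (simp add: sum.reindex)
  also have "\<dots> = (\<Sum>B\<in>Pow (U - S). f (card S + card B))"
  proof (intro sum.cong refl)
    fix B
    assume "B \<in> Pow (U - S)"
    then have "finite B" "S \<inter> B = {}"
      using assms(1) finite_subset by auto
    then show "f (card (S \<union> B)) = f (card S + card B)"
      using finite_S by (simp add: card_Un_disjoint)
  qed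
  also have "\<dots> = (\<Sum>j\<le>card U - card S. of_nat ((card U - card S) choose j) * f (card S + j))"
    using sum_Pow_card[of "U - S" "\<lambda>j. f (card S + j)"] assms finite_S
    by (simp add: card_Diff_subset)
  also have "\<dots> = (\<Sum>m = card S..card U. of_nat ((card U - card S) choose (m - card S)) * f m)"
    using sum.shift_bounds_cl_nat_ivl[of "\<lambda>m. of_nat ((card U - card S) choose (m - card S)) * f m"
        0 "card S" "card U - card S"]
      card_mono[OF assms]
    by (simp add: atLeast0AtMost add.commute)
  finally show ?thesis .
qed

lemma z_norm_const:
  assumes "k \<le> n"
  shows "z_norm n k (\<lambda>_. c) = (\<Sum>m = k..n. of_nat (n choose m) * (c ^ m * (1 - c) ^ (n - m)))"
proof -
  let ?w = "\<lambda>m. c ^ m * (1 - c) ^ (n - m)"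
  have "z_norm n k (\<lambda>_. c)
      = (\<Sum>C | {} \<subseteq> C \<and> C \<subseteq> universe n. if k \<le> card C then ?w (card C) else 0)"
    unfolding z_norm_def
    by (intro sum.mono_neutral_cong_left) (auto simp: universe_def cons_weight_const)
  also have "\<dots> = (\<Sum>m = 0..n. of_nat (n choose m) * (if k \<le> m then ?w m else 0))"
    using sum_card_supersets[of "universe n" "{}"] by simp
  also have "\<dots> = (\<Sum>m = k..n. of_nat (n choose m) * ?w m)"
    by (intro sum.mono_neutral_cong_right) auto
  finally show ?thesis .
qed

lemma z_norm_const_pos:
  assumes "0 < c" "c \<le> 1" "k \<le> n"
  shows "0 < z_norm n k (\<lambda>_. c)"
  unfolding z_norm_const[OF assms(3)] using assms
  by (intro sum_pos2[where i = n]) auto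

lemma choose_diff_mult_fact_div:
  assumes "k \<le> m" "m \<le> n"
  shows "of_nat ((n - k) choose (m - k)) * (fact (m - k) / fact m)
    = fact (n - k) / fact n * (of_nat (n choose m) :: real)"
proof -
  have "fact (n - k) = fact (m - k) * fact (n - m) * (of_nat ((n - k) choose (m - k)) :: real)"
    using assms diff_le_mono[OF assms(2), of k] binomial_fact[of "m - k" "n - k", where 'a = real]
    by (simp add: field_simps)
  moreover have "fact n = fact m * fact (n - m) * (of_nat (n choose m) :: real)"
    using assms binomial_fact[of m n, where 'a = real] by (simp add: field_simps)
  ultimately show ?thesis
    using assms by simp
qed

lemma Pr_PLC_const_eq_sum_supersets:
  assumes "r \<in> rankings n k"
  shows "Pr_PLC n k (\<lambda>_. a) (\<lambda>_. c) r
    = (\<Sum>C | set r \<subseteq> C \<and> C \<subseteq> universe n.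
        fact (card C - k) / fact (card C) * (c ^ card C * (1 - c) ^ (n - card C))) / z_norm n k (\<lambda>_. c)"
proof -
  let ?U = "universe n" and ?S = "set r" and ?z = "z_norm n k (\<lambda>_. c)"
  let ?f = "\<lambda>C. fact (card C - k) / fact (card C) * (c ^ card C * (1 - c) ^ (n - card C)) / ?z"
  have r: "distinct r" "length r = k" "?S \<subseteq> ?U"
    using assms by (auto simp: rankings_def)
  have summand: "Pr_C n k (\<lambda>_. c) C * Pr_PL (\<lambda>_. a) C r = (if ?S \<subseteq> C then ?f C else 0)"
    if "C \<subseteq> ?U" for C
  proof -
    have "finite C"
      using that finite_universe finite_subset by blast
    then have "?S \<subseteq> C \<Longrightarrow> k \<le> card C"
      using r card_mono distinct_card by metis
    then show ?thesis
      using that \<open>finite C\<close> r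
      by (simp add: Pr_C_def Pr_PL_const_utility cons_weight_const ac_simps)
  qed
  have "Pr_PLC n k (\<lambda>_. a) (\<lambda>_. c) r = (\<Sum>C\<in>Pow ?U. if ?S \<subseteq> C then ?f C else 0)"
    unfolding Pr_PLC_def using summand by (intro sum.cong) auto
  also have "\<dots> = (\<Sum>C | ?S \<subseteq> C \<and> C \<subseteq> ?U. ?f C)"
    by (intro sum.mono_neutral_cong_right) auto
  finally show ?thesis
    by (simp add: sum_divide_distrib)
qed

theorem Pr_PLC_const_utility_const_consideration:
  assumes "r \<in> rankings n k" "0 < c" "c \<le> 1"
  shows "Pr_PLC n k (\<lambda>_. a) (\<lambda>_. c) r = fact (n - k) / fact n"
proof -
  let ?z = "z_norm n k (\<lambda>_. c)"
  let ?w = "\<lambda>m. c ^ m * (1 - c) ^ (n - m)" and ?q = "\<lambda>m. fact (m - k) / fact m :: real"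
  have "set r \<subseteq> universe n" "card (set r) = k"
    using assms(1) by (auto simp: rankings_def distinct_card)
  then have "k \<le> n"
    using card_mono[of "universe n" "set r"] by simp
  have "Pr_PLC n k (\<lambda>_. a) (\<lambda>_. c) r
      = (\<Sum>C | set r \<subseteq> C \<and> C \<subseteq> universe n. ?q (card C) * ?w (card C)) / ?z"
    by (rule Pr_PLC_const_eq_sum_supersets[OF assms(1)])
  also have "\<dots> = (\<Sum>m = k..n. of_nat ((n - k) choose (m - k)) * (?q m * ?w m)) / ?z"
    using sum_card_supersets[OF finite_universe \<open>set r \<subseteq> universe n\<close>, of "\<lambda>m. ?q m * ?w m"]
    by (simp only: \<open>card (set r) = k\<close> card_universe)
  also have "\<dots> = (\<Sum>m = k..n. fact (n - k) / fact n * (of_nat (n choose m) * ?w m)) / ?z"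
  proof (intro arg_cong[where f = "\<lambda>x. x / ?z"] sum.cong refl)
    fix m
    assume "m \<in> {k..n}"
    then have choose_fact:
        "of_nat ((n - k) choose (m - k)) * ?q m = fact (n - k) / fact n * of_nat (n choose m)"
      by (intro choose_diff_mult_fact_div) auto
    have "of_nat ((n - k) choose (m - k)) * (?q m * ?w m)
        = of_nat ((n - k) choose (m - k)) * ?q m * ?w m"
      by (rule mult.assoc[symmetric])
    also have "\<dots> = fact (n - k) / fact n * of_nat (n choose m) * ?w m"
      by (simp only: choose_fact)
    finally show "of_nat ((n - k) choose (m - k)) * (?q m * ?w m)
        = fact (n - k) / fact n * (of_nat (n choose m) * ?w m)"
      by (simp only: mult.assoc)
  qed
  also have "\<dots> = fact (n - k) / fact n * ?z / ?z"
    by (simp add: z_norm_const[OF \<open>k \<le> n\<close>] sum_distrib_left)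
  also have "\<dots> = fact (n - k) / fact n"
    using z_norm_const_pos[OF assms(2,3) \<open>k \<le> n\<close>] by simp
  finally show ?thesis .
qed

theorem theorem1:
  fixes n k :: nat
  assumes "1 \<le> n" and "1 \<le> k" and "k \<le> n"
  shows "\<exists>(u :: nat \<Rightarrow> real) (p :: nat \<Rightarrow> real) (p' :: nat \<Rightarrow> real).
           (\<forall>i\<in>universe n. 0 < p i \<and> p i \<le> 1) \<and>
           (\<forall>i\<in>universe n. 0 < p' i \<and> p' i \<le> 1) \<and>
           (\<exists>i\<in>universe n. p i \<noteq> p' i) \<and>
           (\<forall>r\<in>rankings n k. Pr_PLC n k u p r = Pr_PLC n k u p' r)"
proof (intro exI conjI)
  show "\<forall>i\<in>universe n. 0 < (1::real) \<and> (1::real) \<le> 1"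
    and "\<forall>i\<in>universe n. 0 < (1/2::real) \<and> (1/2::real) \<le> 1"
    by simp_all
  show "\<exists>i\<in>universe n. (\<lambda>_. 1::real) i \<noteq> (\<lambda>_. 1/2) i"
    using assms(1) by (auto simp: universe_def)
  show "\<forall>r\<in>rankings n k. Pr_PLC n k (\<lambda>_. 0) (\<lambda>_. 1) r = Pr_PLC n k (\<lambda>_. 0) (\<lambda>_. 1/2) r"
    by (simp add: Pr_PLC_const_utility_const_consideration)
qed

end
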